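(* Let $A, C, D$ be binary random variables, with $A$ taking values $a,\overline{a}$, $C$ taking values $c,\overline{c}$, $D$ taking values $d,\overline{d}$, and let $Y$ be a real random variable with finite expectation. Suppose the joint distribution factorizes as \[ p(A,C,D,Y)=p(D)\,p(C\mid D)\,p(A\mid C)\,p(Y\mid A,C). \] Assume that $C$ and $D$ are dependent, and that every event $\{A=x, C=y, D=z\}$ has positive probability. If $E[Y\mid A,D]$ is monotone in $D$, then $RD_{obs}$ lies between $RD_{true}$ and $RD_{crude}$.
   Context: $RD_{true}=E[Y|a,c]p(c)+E[Y|a,\overline{c}]p(\overline{c})-E[Y|\overline{a},c]p(c)-E[Y|\overline{a},\overline{c}]p(\overline{c})$; $RD_{crude}=E[Y|a]-E[Y|\overline{a}]$; $RD_{obs}=E[Y|a,d]p(d)+E[Y|a,\overline{d}]p(\overline{d})-E[Y|\overline{a},d]p(d)-E[Y|\overline{a},\overline{d}]p(\overline{d})$. $E[Y\mid A,D]$ is nondecreasing in $D$ if $E[Y\mid a,d]\ge E[Y\mid a,\overline{d}]$ and $E[Y\mid \overline{a},d]\ge E[Y\mid \overline{a},\overline{d}]$; nonincreasing if both inequalities are reversed; monotone if it is either. *)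

theory Defs
  imports "HOL-Probability.Probability"
begin

text \<open>Binary random variables are modelled as bool-valued maps: True stands for a (resp. c, d),
False for the complement value.\<close>

definition ev :: "'a measure \<Rightarrow> ('a \<Rightarrow> bool) \<Rightarrow> 'a set" where
  "ev M P = {w \<in> space M. P w}"

definition pr :: "'a measure \<Rightarrow> ('a \<Rightarrow> bool) \<Rightarrow> real" where
  "pr M P = measure M (ev M P)"

definition cexp :: "'a measure \<Rightarrow> ('a \<Rightarrow> real) \<Rightarrow> ('a \<Rightarrow> bool) \<Rightarrow> real" where
  "cexp M Y P = (\<integral>w. indicator (ev M P) w * Y w \<partial>M) / pr M P"

text \<open>Adjusted risk difference standardising over the binary variable Z (used for RD_true with Z = C
and RD_obs with Z = D).\<close>
definition RD_adj :: "'a measure \<Rightarrow> ('a \<Rightarrow> real) \<Rightarrow> ('a \<Rightarrow> bool) \<Rightarrow> ('a \<Rightarrow> bool) \<Rightarrow> real" where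
  "RD_adj M Y A Z =
     cexp M Y (\<lambda>w. A w \<and> Z w) * pr M Z
   + cexp M Y (\<lambda>w. A w \<and> \<not> Z w) * pr M (\<lambda>w. \<not> Z w)
   - cexp M Y (\<lambda>w. \<not> A w \<and> Z w) * pr M Z
   - cexp M Y (\<lambda>w. \<not> A w \<and> \<not> Z w) * pr M (\<lambda>w. \<not> Z w)"

definition RD_crude :: "'a measure \<Rightarrow> ('a \<Rightarrow> real) \<Rightarrow> ('a \<Rightarrow> bool) \<Rightarrow> real" where
  "RD_crude M Y A = cexp M Y A - cexp M Y (\<lambda>w. \<not> A w)"

definition nondecr_in :: "'a measure \<Rightarrow> ('a \<Rightarrow> real) \<Rightarrow> ('a \<Rightarrow> bool) \<Rightarrow> ('a \<Rightarrow> bool) \<Rightarrow> bool" where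
  "nondecr_in M Y A D \<longleftrightarrow>
     cexp M Y (\<lambda>w. A w \<and> D w) \<ge> cexp M Y (\<lambda>w. A w \<and> \<not> D w) \<and>
     cexp M Y (\<lambda>w. \<not> A w \<and> D w) \<ge> cexp M Y (\<lambda>w. \<not> A w \<and> \<not> D w)"

definition nonincr_in :: "'a measure \<Rightarrow> ('a \<Rightarrow> real) \<Rightarrow> ('a \<Rightarrow> bool) \<Rightarrow> ('a \<Rightarrow> bool) \<Rightarrow> bool" where
  "nonincr_in M Y A D \<longleftrightarrow>
     cexp M Y (\<lambda>w. A w \<and> D w) \<le> cexp M Y (\<lambda>w. A w \<and> \<not> D w) \<and>
     cexp M Y (\<lambda>w. \<not> A w \<and> D w) \<le> cexp M Y (\<lambda>w. \<not> A w \<and> \<not> D w)"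

definition monotone_in :: "'a measure \<Rightarrow> ('a \<Rightarrow> real) \<Rightarrow> ('a \<Rightarrow> bool) \<Rightarrow> ('a \<Rightarrow> bool) \<Rightarrow> bool" where
  "monotone_in M Y A D \<longleftrightarrow> nondecr_in M Y A D \<or> nonincr_in M Y A D"

end

theory Submission
  imports Defs
begin

text \<open>
  Write \<open>\<delta> = P(D)\<close>, \<open>\<pi>\<^sub>z = P(C | D = z)\<close> and \<open>m(x, y) = E[Y | A = x, C = y]\<close>.
  By the factorization, \<open>D\<close> affects \<open>(A, Y)\<close> only through the prior of \<open>C\<close>: with
  \<open>f\<^sub>x(p)\<close> the posterior \<open>P(C | A = x)\<close> obtained by Bayes' rule from a prior \<open>P(C) = p\<close>,
  \<open>E[Y | A = x, D = z] = m(x, 0) + (m(x, 1) - m(x, 0)) f\<^sub>x(\<pi>\<^sub>z)\<close>, and \<open>E[Y | A = x]\<close> is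
  the same expression at \<open>t = P(C) = \<delta> \<pi>\<^sub>1 + (1 - \<delta>) \<pi>\<^sub>0\<close>. So \<open>RD_true\<close>, \<open>RD_obs\<close>
  and \<open>RD_crude\<close> weight the stratum \<open>C = 1\<close> for \<open>A = x\<close> by \<open>t\<close>,
  \<open>\<delta> f\<^sub>x(\<pi>\<^sub>1) + (1 - \<delta>) f\<^sub>x(\<pi>\<^sub>0)\<close> and \<open>f\<^sub>x(t)\<close> respectively.
  Each \<open>f\<^sub>x\<close> lies above the diagonal and is concave, or lies below it and is convex, according
  to the sign of \<open>P(A = x | C) - P(A = x | \<not>C)\<close>; hence the middle weight lies between the
  other two, on opposite sides for \<open>x = a\<close> and \<open>x = \<not>a\<close>. Since every \<open>f\<^sub>x\<close> is strictly
  increasing, monotonicity of \<open>E[Y | A, D]\<close> in \<open>D\<close> forces the stratum differences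
  \<open>m(a, 1) - m(a, 0)\<close> and \<open>m(\<not>a, 1) - m(\<not>a, 0)\<close> to have equal signs, and then
  \<open>RD_obs - RD_true\<close> and \<open>RD_crude - RD_obs\<close> have equal signs.
\<close>

text \<open>Bayes' rule: \<open>P(C | E)\<close> from the prior \<open>p = P(C)\<close> and the likelihoods
  \<open>a = P(E | C)\<close>, \<open>b = P(E | \<not>C)\<close>.\<close>

definition posterior :: "real \<Rightarrow> real \<Rightarrow> real \<Rightarrow> real" where
  "posterior a b p = p * a / (p * a + (1 - p) * b)"

lemma posterior_denom_pos:
  fixes a b p :: real
  assumes "0 < a" "0 < b" "0 \<le> p" "p \<le> 1"
  shows "0 < p * a + (1 - p) * b"
  using assms by (cases "p = 0") (auto intro: add_pos_nonneg)

lemma posterior_minus_prior: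
  fixes a b p :: real
  assumes "0 < a" "0 < b" "0 \<le> p" "p \<le> 1"
  shows "posterior a b p - p = (a - b) * (p * (1 - p) / (p * a + (1 - p) * b))"
  using posterior_denom_pos[OF assms] unfolding posterior_def
  by (simp add: field_simps)

lemma posterior_diff:
  fixes a b p q :: real
  assumes "0 < a" "0 < b" "0 \<le> p" "p \<le> 1" "0 \<le> q" "q \<le> 1"
  shows "posterior a b q - posterior a b p
       = (q - p) * a * b / ((q * a + (1 - q) * b) * (p * a + (1 - p) * b))"
  using posterior_denom_pos[of a b p] posterior_denom_pos[of a b q] assms unfolding posterior_def
  by (simp add: field_simps)

lemma posterior_mixture_gap:
  fixes a b \<delta> p1 p0 :: real
  assumes ab: "0 < a" "0 < b" and p: "0 \<le> p1" "p1 \<le> 1" "0 \<le> p0" "p0 \<le> 1" and \<delta>: "0 \<le> \<delta>" "\<delta> \<le> 1"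
  defines "t \<equiv> \<delta> * p1 + (1 - \<delta>) * p0"
  shows "posterior a b t - (\<delta> * posterior a b p1 + (1 - \<delta>) * posterior a b p0)
       = (a - b) * (a * b * \<delta> * (1 - \<delta>) * (p1 - p0)\<^sup>2
          / ((t * a + (1 - t) * b) * (p1 * a + (1 - p1) * b) * (p0 * a + (1 - p0) * b)))"
proof -
  define den where "den x = x * a + (1 - x) * b" for x
  have t: "0 \<le> t" "t \<le> 1"
    unfolding t_def using convex_bound_le[of p1 1 p0 \<delta> "1 - \<delta>"] p \<delta> by auto
  have den_pos: "den p1 > 0" "den p0 > 0" "den t > 0"
    unfolding den_def using posterior_denom_pos ab p t by auto
  have "posterior a b t - (\<delta> * posterior a b p1 + (1 - \<delta>) * posterior a b p0)
      = \<delta> * (posterior a b t - posterior a b p1) + (1 - \<delta>) * (posterior a b t - posterior a b p0)"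
    by (simp add: algebra_simps)
  also have "\<dots> = \<delta> * ((1 - \<delta>) * (p0 - p1) * a * b / (den t * den p1))
                   + (1 - \<delta>) * (\<delta> * (p1 - p0) * a * b / (den t * den p0))"
  proof -
    have "t - p1 = (1 - \<delta>) * (p0 - p1)" "t - p0 = \<delta> * (p1 - p0)"
      unfolding t_def by (simp_all add: algebra_simps)
    then show ?thesis
      using posterior_diff[OF ab p(1,2) t] posterior_diff[OF ab p(3,4) t] by (simp add: den_def)
  qed
  also have "\<dots> = \<delta> * (1 - \<delta>) * (p0 - p1) * a * b / den t * (1 / den p1 - 1 / den p0)"
    using den_pos by (simp add: field_simps)
  also have "1 / den p1 - 1 / den p0 = (p0 - p1) * (a - b) / (den p1 * den p0)"
    using den_pos unfolding den_def by (simp add: field_simps)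
  finally show ?thesis
    unfolding den_def by (simp add: power2_eq_square field_simps)
qed

lemma posterior_strict_mono:
  fixes a b p q :: real
  assumes "0 < a" "0 < b" "0 \<le> p" "p < q" "q \<le> 1"
  shows "posterior a b p < posterior a b q"
proof -
  have "0 < (q - p) * a * b / ((q * a + (1 - q) * b) * (p * a + (1 - p) * b))"
    using assms posterior_denom_pos[of a b p] posterior_denom_pos[of a b q] by simp
  with posterior_diff[of a b p q] assms show ?thesis by simp
qed

lemma posterior_mixture_bounds:
  fixes a b \<delta> p1 p0 :: real
  assumes ab: "0 < a" "0 < b" and p: "0 \<le> p1" "p1 \<le> 1" "0 \<le> p0" "p0 \<le> 1" and \<delta>: "0 \<le> \<delta>" "\<delta> \<le> 1"
  defines "t \<equiv> \<delta> * p1 + (1 - \<delta>) * p0"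
    and "u \<equiv> \<delta> * posterior a b p1 + (1 - \<delta>) * posterior a b p0"
  shows "b \<le> a \<Longrightarrow> t \<le> u \<and> u \<le> posterior a b t"
    and "a \<le> b \<Longrightarrow> posterior a b t \<le> u \<and> u \<le> t"
proof -
  define den where "den p = p * a + (1 - p) * b" for p
  have t: "0 \<le> t" "t \<le> 1"
    unfolding t_def using convex_bound_le[of p1 1 p0 \<delta> "1 - \<delta>"] p \<delta> by auto
  have den_pos: "den p1 > 0" "den p0 > 0" "den t > 0"
    unfolding den_def using posterior_denom_pos ab p t by auto
  define G where "G = \<delta> * (p1 * (1 - p1) / den p1) + (1 - \<delta>) * (p0 * (1 - p0) / den p0)"
  define H where "H = a * b * \<delta> * (1 - \<delta>) * (p1 - p0)\<^sup>2 / (den t * den p1 * den p0)"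
  have "G \<ge> 0" "H \<ge> 0"
    unfolding G_def H_def using den_pos ab p \<delta> by simp_all
  moreover have "u - t = (a - b) * G"
    using posterior_minus_prior[OF ab p(1,2)] posterior_minus_prior[OF ab p(3,4)]
    unfolding u_def t_def G_def den_def by (simp add: algebra_simps)
  moreover have "posterior a b t - u = (a - b) * H"
    using posterior_mixture_gap[OF ab p \<delta>] unfolding u_def t_def[symmetric] H_def den_def .
  ultimately show "b \<le> a \<Longrightarrow> t \<le> u \<and> u \<le> posterior a b t"
    and "a \<le> b \<Longrightarrow> posterior a b t \<le> u \<and> u \<le> t"
    by (smt (verit) mult_nonneg_nonneg mult_nonpos_nonneg)+
qed

lemma weighted_difference_between:
  fixes d1 d0 t u1 u0 g1 g0 :: real
  assumes "0 \<le> d1 \<and> 0 \<le> d0 \<or> d1 \<le> 0 \<and> d0 \<le> 0"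
    and "t \<le> u1 \<and> u1 \<le> g1 \<and> g0 \<le> u0 \<and> u0 \<le> t \<or> g1 \<le> u1 \<and> u1 \<le> t \<and> t \<le> u0 \<and> u0 \<le> g0"
  shows "min (d1 * t - d0 * t) (d1 * g1 - d0 * g0) \<le> d1 * u1 - d0 * u0
       \<and> d1 * u1 - d0 * u0 \<le> max (d1 * t - d0 * t) (d1 * g1 - d0 * g0)"
proof -
  have "0 \<le> d1 * (u1 - t) \<and> 0 \<le> d0 * (t - u0) \<and> 0 \<le> d1 * (g1 - u1) \<and> 0 \<le> d0 * (u0 - g0)
      \<or> d1 * (u1 - t) \<le> 0 \<and> d0 * (t - u0) \<le> 0 \<and> d1 * (g1 - u1) \<le> 0 \<and> d0 * (u0 - g0) \<le> 0"
    using assms by (auto simp: zero_le_mult_iff mult_le_0_iff)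
  then show ?thesis by (auto simp: algebra_simps)
qed

definition mixture_mean ::
  "(bool \<Rightarrow> bool \<Rightarrow> real) \<Rightarrow> (bool \<Rightarrow> bool \<Rightarrow> real) \<Rightarrow> bool \<Rightarrow> real \<Rightarrow> real" where
  "mixture_mean lik m x p = m x False + (m x True - m x False) * posterior (lik x True) (lik x False) p"

lemma weighted_mean_eq_mixture:
  fixes a b p c w1 w0 m1 m0 :: real
  assumes "0 < c" "0 < p * a + (1 - p) * b" "w1 = c * (p * a)" "w0 = c * ((1 - p) * b)"
  shows "(w1 * m1 + w0 * m0) / (w1 + w0) = m0 + (m1 - m0) * posterior a b p"
proof -
  have "(w1 * m1 + w0 * m0) / (w1 + w0)
      = (c * (p * a * m1 + (1 - p) * b * m0)) / (c * (p * a + (1 - p) * b))"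
    unfolding assms(3,4) by (simp add: algebra_simps)
  also have "\<dots> = (p * a * m1 + (1 - p) * b * m0) / (p * a + (1 - p) * b)"
    using assms(1) by simp
  also have "\<dots> = m0 + (m1 - m0) * posterior a b p"
    using assms(2) unfolding posterior_def by (simp add: field_simps)
  finally show ?thesis .
qed

text \<open>The three risk differences in the parameters \<open>\<delta> = P(D)\<close>, \<open>\<pi>1, \<pi>0 = P(C | D = d, \<not>d)\<close>,
  \<open>lik x y = P(A = x | C = y)\<close> and \<open>m x y = E[Y | A = x, C = y]\<close>: the arguments of \<open>min\<close>
  and \<open>max\<close> are \<open>RD_true\<close> and \<open>RD_crude\<close>, the middle term is \<open>RD_obs\<close>.\<close>

lemma risk_differences_between:
  fixes \<delta> \<pi>1 \<pi>0 :: real and lik m :: "bool \<Rightarrow> bool \<Rightarrow> real"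
  assumes \<delta>: "0 \<le> \<delta>" "\<delta> \<le> 1" and \<pi>: "0 \<le> \<pi>1" "\<pi>1 \<le> 1" "0 \<le> \<pi>0" "\<pi>0 \<le> 1"
    and lik_pos: "\<And>x y. 0 < lik x y" and lik_compl: "\<And>y. lik False y = 1 - lik True y"
  defines "t \<equiv> \<delta> * \<pi>1 + (1 - \<delta>) * \<pi>0"
    and "e \<equiv> mixture_mean lik m"
  assumes mono: "e True \<pi>0 \<le> e True \<pi>1 \<and> e False \<pi>0 \<le> e False \<pi>1
               \<or> e True \<pi>1 \<le> e True \<pi>0 \<and> e False \<pi>1 \<le> e False \<pi>0"
  shows "min (m True True * t + m True False * (1 - t) - m False True * t - m False False * (1 - t))
             (e True t - e False t)
           \<le> e True \<pi>1 * \<delta> + e True \<pi>0 * (1 - \<delta>) - e False \<pi>1 * \<delta> - e False \<pi>0 * (1 - \<delta>)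
       \<and> e True \<pi>1 * \<delta> + e True \<pi>0 * (1 - \<delta>) - e False \<pi>1 * \<delta> - e False \<pi>0 * (1 - \<delta>)
           \<le> max (m True True * t + m True False * (1 - t) - m False True * t - m False False * (1 - t))
             (e True t - e False t)"
proof -
  define f where "f x = posterior (lik x True) (lik x False)" for x
  define d where "d x = m x True - m x False" for x
  define u where "u x = \<delta> * f x \<pi>1 + (1 - \<delta>) * f x \<pi>0" for x
  have "min (d True * t - d False * t) (d True * f True t - d False * f False t)
          \<le> d True * u True - d False * u False
      \<and> d True * u True - d False * u False
          \<le> max (d True * t - d False * t) (d True * f True t - d False * f False t)"
  proof (cases "\<pi>1 = \<pi>0")
    case True
    then show ?thesis unfolding u_def t_def by (simp add: algebra_simps)
  next
    case False
    have "0 < (\<pi>1 - \<pi>0) * (f x \<pi>1 - f x \<pi>0)" for x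
      using False posterior_strict_mono[of "lik x True" "lik x False" \<pi>1 \<pi>0]
        posterior_strict_mono[of "lik x True" "lik x False" \<pi>0 \<pi>1] lik_pos \<pi>
      unfolding f_def by (cases "\<pi>0 < \<pi>1") (auto simp: mult_pos_pos mult_neg_neg)
    moreover have "e x \<pi>1 - e x \<pi>0 = d x * (f x \<pi>1 - f x \<pi>0)" for x
      unfolding e_def mixture_mean_def d_def f_def by (simp add: algebra_simps)
    ultimately have same_sign: "0 \<le> d True \<and> 0 \<le> d False \<or> d True \<le> 0 \<and> d False \<le> 0"
      using mono by (smt (verit, best) mult_le_0_iff zero_le_mult_iff)
    have bounds: "lik x False \<le> lik x True \<Longrightarrow> t \<le> u x \<and> u x \<le> f x t"
      "lik x True \<le> lik x False \<Longrightarrow> f x t \<le> u x \<and> u x \<le> t" for x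
      using posterior_mixture_bounds[of "lik x True" "lik x False" \<pi>1 \<pi>0 \<delta>] lik_pos \<pi> \<delta>
      unfolding u_def f_def t_def by auto
    have "lik True False \<le> lik True True \<longleftrightarrow> lik False True \<le> lik False False"
      using lik_compl by auto
    then have "t \<le> u True \<and> u True \<le> f True t \<and> f False t \<le> u False \<and> u False \<le> t
        \<or> f True t \<le> u True \<and> u True \<le> t \<and> t \<le> u False \<and> u False \<le> f False t"
      using bounds by (metis linear)
    with same_sign show ?thesis by (rule weighted_difference_between)
  qed
  moreover have "e True \<pi>1 * \<delta> + e True \<pi>0 * (1 - \<delta>) - e False \<pi>1 * \<delta> - e False \<pi>0 * (1 - \<delta>)
      = (m True False - m False False) + (d True * u True - d False * u False)"
    unfolding e_def mixture_mean_def f_def[symmetric] d_def[symmetric] u_def by (simp add: algebra_simps)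
  moreover have "m True True * t + m True False * (1 - t) - m False True * t - m False False * (1 - t)
      = (m True False - m False False) + (d True * t - d False * t)"
    unfolding d_def by (simp add: algebra_simps)
  moreover have "e True t - e False t
      = (m True False - m False False) + (d True * f True t - d False * f False t)"
    unfolding e_def mixture_mean_def f_def d_def by (simp add: algebra_simps)
  ultimately show ?thesis
    by (simp only: min_add_distrib_right[symmetric] max_add_distrib_right[symmetric] add_le_cancel_left)
qed

lemma cond_prob_eq_pr: "cond_prob M P Q = pr M (\<lambda>w. P w \<and> Q w) / pr M Q"
  by (simp add: cond_prob_def pr_def ev_def)

lemma sets_ev[measurable (raw)]: "Measurable.pred M P \<Longrightarrow> ev M P \<in> sets M"
  unfolding ev_def by measurable

lemma (in finite_measure) pr_disjoint_union:
  assumes "ev M P1 \<in> sets M" "ev M P0 \<in> sets M"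
    and "\<And>w. P w \<longleftrightarrow> P1 w \<or> P0 w" "\<And>w. \<not> (P1 w \<and> P0 w)"
  shows "pr M P = pr M P1 + pr M P0"
proof -
  have "ev M P = ev M P1 \<union> ev M P0" "ev M P1 \<inter> ev M P0 = {}"
    using assms(3,4) by (auto simp: ev_def)
  then show ?thesis
    unfolding pr_def using finite_measure_Union[OF assms(1,2)] by simp
qed

lemma integral_ev_disjoint_union:
  fixes Y :: "'a \<Rightarrow> real"
  assumes "integrable M Y" "ev M P1 \<in> sets M" "ev M P0 \<in> sets M"
    and "\<And>w. P w \<longleftrightarrow> P1 w \<or> P0 w" "\<And>w. \<not> (P1 w \<and> P0 w)"
  shows "(\<integral>w. indicator (ev M P) w * Y w \<partial>M)
       = (\<integral>w. indicator (ev M P1) w * Y w \<partial>M) + (\<integral>w. indicator (ev M P0) w * Y w \<partial>M)"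
proof -
  have "indicator (ev M P) w * Y w = indicator (ev M P1) w * Y w + indicator (ev M P0) w * Y w" for w
    using assms(4,5)[of w] by (auto simp: ev_def indicator_def)
  then show ?thesis
    using integrable_mult_indicator[OF assms(2,1)] integrable_mult_indicator[OF assms(3,1)] by simp
qed

lemma (in finite_measure) cexp_disjoint_union:
  fixes Y :: "'a \<Rightarrow> real"
  assumes "integrable M Y" "ev M P1 \<in> sets M" "ev M P0 \<in> sets M"
    and "\<And>w. P w \<longleftrightarrow> P1 w \<or> P0 w" "\<And>w. \<not> (P1 w \<and> P0 w)"
    and "pr M P1 \<noteq> 0" "pr M P0 \<noteq> 0"
  shows "cexp M Y P = (pr M P1 * cexp M Y P1 + pr M P0 * cexp M Y P0) / (pr M P1 + pr M P0)"
  using integral_ev_disjoint_union[OF assms(1-5)] pr_disjoint_union[OF assms(2-5)] assms(6,7)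
  by (simp add: cexp_def)

lemma integral_indicator_proportional:
  fixes Y :: "'a \<Rightarrow> real"
  assumes E1: "E1 \<in> sets M" and E2: "E2 \<in> sets M" and Y[measurable]: "Y \<in> borel_measurable M"
    and "finite_measure M" and "k \<ge> 0"
    and proportional: "\<And>B. B \<in> sets borel \<Longrightarrow>
      measure M (E1 \<inter> (Y -` B \<inter> space M)) = k * measure M (E2 \<inter> (Y -` B \<inter> space M))"
  shows "(\<integral>w. indicator E1 w * Y w \<partial>M) = k * (\<integral>w. indicator E2 w * Y w \<partial>M)"
proof -
  define N where "N E = distr (density M (indicator E)) borel Y" for E
  have Y_density[measurable]: "Y \<in> borel_measurable (density M (indicator E))" for E
    by (simp add: measurable_cong_sets[OF sets_density refl])
  have integral_N: "(\<integral>w. indicator E w * Y w \<partial>M) = (\<integral>x. x \<partial>N E)" if "E \<in> sets M" for E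
  proof -
    have "(\<integral>x. x \<partial>N E) = (\<integral>w. Y w \<partial>density M (\<lambda>w. ennreal (indicator E w)))"
      unfolding N_def by (simp add: integral_distr ennreal_indicator)
    also have "\<dots> = (\<integral>w. indicator E w *\<^sub>R Y w \<partial>M)"
      using that by (intro integral_density) auto
    finally show ?thesis by simp
  qed
  have emeasure_N: "emeasure (N E) B = measure M (E \<inter> (Y -` B \<inter> space M))"
    if "E \<in> sets M" "B \<in> sets borel" for E B
    using that \<open>finite_measure M\<close> unfolding N_def
    by (simp add: emeasure_distr emeasure_restricted finite_measure.emeasure_eq_measure)
  have "N E1 = density (N E2) (\<lambda>_. ennreal k)"
  proof (rule measure_eqI)
    fix B assume "B \<in> sets (N E1)"
    then have "B \<in> sets borel" "B \<in> sets (N E2)" by (simp_all add: N_def)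
    then show "emeasure (N E1) B = emeasure (density (N E2) (\<lambda>_. ennreal k)) B"
      using E1 E2 \<open>k \<ge> 0\<close> by (simp add: emeasure_N emeasure_density_const proportional ennreal_mult)
  qed (simp add: N_def)
  then have "(\<integral>x. x \<partial>N E1) = (\<integral>x. k *\<^sub>R x \<partial>N E2)"
    using \<open>k \<ge> 0\<close> by (simp add: integral_density N_def)
  then show ?thesis using integral_N E1 E2 by simp
qed

lemma measure_ev_inter_vimage:
  "measure M (ev M P \<inter> (Y -` B \<inter> space M)) = pr M (\<lambda>w. P w \<and> Y w \<in> B)"
  unfolding pr_def ev_def by (rule arg_cong[where f="measure M"]) auto

lemma cond_prob_nonneg: "0 \<le> cond_prob M P Q"
  by (simp add: cond_prob_def)

lemma (in finite_measure) cond_prob_le_1: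
  assumes "Measurable.pred M Q"
  shows "cond_prob M P Q \<le> 1"
proof -
  have "\<P>(w in M. P w \<and> Q w) \<le> \<P>(w in M. Q w)"
    using assms by (intro finite_measure_mono) auto
  then show ?thesis
    using measure_nonneg[of M "{w \<in> space M. Q w}"] by (auto simp: cond_prob_def divide_le_eq_1 less_le)
qed

lemma (in finite_measure) cond_prob_compl:
  assumes "Measurable.pred M P" "Measurable.pred M Q" "pr M Q \<noteq> 0"
  shows "cond_prob M (\<lambda>w. \<not> P w) Q = 1 - cond_prob M P Q"
proof -
  have "pr M Q = pr M (\<lambda>w. P w \<and> Q w) + pr M (\<lambda>w. \<not> P w \<and> Q w)"
    using assms by (intro pr_disjoint_union) auto
  with assms(3) show ?thesis by (simp add: cond_prob_eq_pr field_simps)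
qed

lemma (in prob_space) pr_compl:
  assumes "Measurable.pred M P"
  shows "pr M (\<lambda>w. \<not> P w) = 1 - pr M P"
proof -
  have "ev M (\<lambda>w. \<not> P w) = space M - ev M P"
    by (auto simp: ev_def)
  with assms show ?thesis by (simp add: pr_def prob_compl)
qed

locale proxy_confounder_model = prob_space M for M :: "'a measure" +
  fixes A C D :: "'a \<Rightarrow> bool" and Y :: "'a \<Rightarrow> real"
  assumes measurable_A[measurable]: "A \<in> measurable M (count_space UNIV)"
    and measurable_C[measurable]: "C \<in> measurable M (count_space UNIV)"
    and measurable_D[measurable]: "D \<in> measurable M (count_space UNIV)"
    and integrable_Y: "integrable M Y"
    and factorization: "\<And>x y z B. B \<in> sets borel \<Longrightarrow>
      pr M (\<lambda>w. A w = x \<and> C w = y \<and> D w = z \<and> Y w \<in> B)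
      = pr M (\<lambda>w. D w = z) * cond_prob M (\<lambda>w. C w = y) (\<lambda>w. D w = z)
        * cond_prob M (\<lambda>w. A w = x) (\<lambda>w. C w = y)
        * cond_prob M (\<lambda>w. Y w \<in> B) (\<lambda>w. A w = x \<and> C w = y)"
    and cell_pos: "\<And>x y z. 0 < pr M (\<lambda>w. A w = x \<and> C w = y \<and> D w = z)"
begin

definition "pA_given_C x y = cond_prob M (\<lambda>w. A w = x) (\<lambda>w. C w = y)"
definition "pC_given_D z = cond_prob M C (\<lambda>w. D w = z)"
definition "mean_given_AC x y = cexp M Y (\<lambda>w. A w = x \<and> C w = y)"

abbreviation "mean_given_A \<equiv> mixture_mean pA_given_C mean_given_AC"

lemma pr_pos:
  assumes "Measurable.pred M Q" "\<And>w. A w = x \<and> C w = y \<and> D w = z \<Longrightarrow> Q w"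
  shows "0 < pr M Q"
proof -
  have "pr M (\<lambda>w. A w = x \<and> C w = y \<and> D w = z) \<le> pr M Q"
    using assms unfolding pr_def ev_def by (intro finite_measure_mono) auto
  with cell_pos show ?thesis by (rule less_le_trans)
qed

lemma pr_cell:
  "pr M (\<lambda>w. A w = x \<and> C w = y \<and> D w = z)
   = pr M (\<lambda>w. D w = z) * cond_prob M (\<lambda>w. C w = y) (\<lambda>w. D w = z) * pA_given_C x y"
proof -
  have "0 < pr M (\<lambda>w. A w = x \<and> C w = y)"
    by (rule pr_pos[of _ x y z]) auto
  then have "cond_prob M (\<lambda>w. Y w \<in> UNIV) (\<lambda>w. A w = x \<and> C w = y) = 1"
    by (simp add: cond_prob_eq_pr)
  then show ?thesis using factorization[of UNIV x y z] by (simp add: pA_given_C_def)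
qed

lemma cexp_cell: "cexp M Y (\<lambda>w. A w = x \<and> C w = y \<and> D w = z) = mean_given_AC x y"
proof -
  let ?cell = "\<lambda>w. A w = x \<and> C w = y \<and> D w = z" and ?AC = "\<lambda>w. A w = x \<and> C w = y"
  have pos: "0 < pr M ?cell" "0 < pr M ?AC"
    by (rule cell_pos, rule pr_pos[of _ x y z]) auto
  have "(\<integral>w. indicator (ev M ?cell) w * Y w \<partial>M)
      = pr M ?cell / pr M ?AC * (\<integral>w. indicator (ev M ?AC) w * Y w \<partial>M)"
  proof (rule integral_indicator_proportional)
    show "ev M ?cell \<in> sets M" "ev M ?AC \<in> sets M" by measurable
    show "Y \<in> borel_measurable M" using integrable_Y by simp
    show "finite_measure M" by (rule finite_measure_axioms)
    show "0 \<le> pr M ?cell / pr M ?AC" using pos by simp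
  next
    fix B :: "real set" assume "B \<in> sets borel"
    have "pr M (\<lambda>w. ?cell w \<and> Y w \<in> B) = pr M ?cell * cond_prob M (\<lambda>w. Y w \<in> B) ?AC"
      using factorization[OF \<open>B \<in> sets borel\<close>, of x y z] by (simp add: pr_cell pA_given_C_def conj_assoc)
    then show "measure M (ev M ?cell \<inter> (Y -` B \<inter> space M))
        = pr M ?cell / pr M ?AC * measure M (ev M ?AC \<inter> (Y -` B \<inter> space M))"
      by (simp add: measure_ev_inter_vimage cond_prob_eq_pr conj_commute)
  qed
  with pos show ?thesis by (simp add: cexp_def mean_given_AC_def)
qed

lemma pA_given_C_pos: "0 < pA_given_C x y"
proof -
  have "0 < pr M (\<lambda>w. A w = x \<and> C w = y)" "0 < pr M (\<lambda>w. C w = y)"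
    by (rule pr_pos[of _ x y True]; auto)+
  then show ?thesis by (simp add: pA_given_C_def cond_prob_eq_pr)
qed

lemma pA_given_C_False: "pA_given_C False y = 1 - pA_given_C True y"
proof -
  have "pr M (\<lambda>w. C w = y) \<noteq> 0"
    using pr_pos[of "\<lambda>w. C w = y" True y True] by auto
  then show ?thesis
    using cond_prob_compl[of A "\<lambda>w. C w = y"] by (simp add: pA_given_C_def)
qed

lemma pr_D_pos: "0 < pr M (\<lambda>w. D w = z)"
  by (rule pr_pos[of _ True True z]) auto

lemma cond_prob_not_C_given_D: "cond_prob M (\<lambda>w. \<not> C w) (\<lambda>w. D w = z) = 1 - pC_given_D z"
  using cond_prob_compl[of C "\<lambda>w. D w = z"] pr_D_pos[of z] by (simp add: pC_given_D_def)

lemma pr_C: "pr M C = pr M D * pC_given_D True + (1 - pr M D) * pC_given_D False"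
proof -
  have "pr M C = pr M (\<lambda>w. C w \<and> D w) + pr M (\<lambda>w. C w \<and> \<not> D w)"
    by (rule pr_disjoint_union) auto
  then show ?thesis
    using pr_D_pos[of True] pr_D_pos[of False] pr_compl[of D]
    by (simp add: pC_given_D_def cond_prob_eq_pr)
qed

lemma cexp_A_D: "cexp M Y (\<lambda>w. A w = x \<and> D w = z) = mean_given_A x (pC_given_D z)"
proof -
  let ?cell1 = "\<lambda>w. A w = x \<and> C w \<and> D w = z" and ?cell0 = "\<lambda>w. A w = x \<and> \<not> C w \<and> D w = z"
  have pos: "pr M ?cell1 \<noteq> 0" "pr M ?cell0 \<noteq> 0"
    using cell_pos[of x True z] cell_pos[of x False z] by auto
  have "cexp M Y (\<lambda>w. A w = x \<and> D w = z)
      = (pr M ?cell1 * cexp M Y ?cell1 + pr M ?cell0 * cexp M Y ?cell0) / (pr M ?cell1 + pr M ?cell0)"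
    by (rule cexp_disjoint_union[OF integrable_Y _ _ _ _ pos]) auto
  also have "\<dots> = (pr M ?cell1 * mean_given_AC x True + pr M ?cell0 * mean_given_AC x False)
                   / (pr M ?cell1 + pr M ?cell0)"
    using cexp_cell[of x True z] cexp_cell[of x False z] by simp
  also have "\<dots> = mean_given_A x (pC_given_D z)"
    unfolding mixture_mean_def
  proof (rule weighted_mean_eq_mixture[where c = "pr M (\<lambda>w. D w = z)"])
    show "0 < pC_given_D z * pA_given_C x True + (1 - pC_given_D z) * pA_given_C x False"
      using pA_given_C_pos cond_prob_nonneg cond_prob_le_1
      by (intro posterior_denom_pos) (auto simp: pC_given_D_def)
  qed (use pr_D_pos pr_cell[of x True z] pr_cell[of x False z] cond_prob_not_C_given_D
       in \<open>simp_all add: pC_given_D_def\<close>)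
  finally show ?thesis .
qed

lemma cexp_A: "cexp M Y (\<lambda>w. A w = x) = mean_given_A x (pr M C)"
proof -
  let ?AC1 = "\<lambda>w. A w = x \<and> C w" and ?AC0 = "\<lambda>w. A w = x \<and> \<not> C w"
  have pos: "0 < pr M C" "0 < pr M (\<lambda>w. \<not> C w)"
    by (rule pr_pos[of _ True True True]; auto) (rule pr_pos[of _ True False True]; auto)
  have AC1: "pr M ?AC1 = 1 * (pr M C * pA_given_C x True)"
    using pos by (simp add: pA_given_C_def cond_prob_eq_pr)
  have AC0: "pr M ?AC0 = 1 * ((1 - pr M C) * pA_given_C x False)"
    using pos pr_compl[of C] by (simp add: pA_given_C_def cond_prob_eq_pr)
  have "cexp M Y (\<lambda>w. A w = x)
      = (pr M ?AC1 * cexp M Y ?AC1 + pr M ?AC0 * cexp M Y ?AC0) / (pr M ?AC1 + pr M ?AC0)"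
    using pos pA_given_C_pos[of x True] pA_given_C_pos[of x False] pr_compl[of C]
    by (intro cexp_disjoint_union[OF integrable_Y]) (auto simp: AC1 AC0)
  also have "\<dots> = (pr M ?AC1 * mean_given_AC x True + pr M ?AC0 * mean_given_AC x False)
                   / (pr M ?AC1 + pr M ?AC0)"
    by (simp add: mean_given_AC_def)
  also have "\<dots> = mean_given_A x (pr M C)"
    unfolding mixture_mean_def
  proof (rule weighted_mean_eq_mixture[where c = 1])
    show "0 < pr M C * pA_given_C x True + (1 - pr M C) * pA_given_C x False"
      using pA_given_C_pos pos pr_compl[of C] by (intro posterior_denom_pos) auto
  qed (simp_all add: AC1 AC0)
  finally show ?thesis .
qed

lemma RD_adj_D_eq:
  "RD_adj M Y A D
   = mean_given_A True (pC_given_D True) * pr M D + mean_given_A True (pC_given_D False) * (1 - pr M D)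
   - mean_given_A False (pC_given_D True) * pr M D - mean_given_A False (pC_given_D False) * (1 - pr M D)"
  using cexp_A_D[of True True] cexp_A_D[of True False] cexp_A_D[of False True] cexp_A_D[of False False]
    pr_compl[of D]
  by (simp add: RD_adj_def)

lemma RD_adj_C_eq:
  "RD_adj M Y A C
   = mean_given_AC True True * pr M C + mean_given_AC True False * (1 - pr M C)
   - mean_given_AC False True * pr M C - mean_given_AC False False * (1 - pr M C)"
  using pr_compl[of C] by (simp add: RD_adj_def mean_given_AC_def)

lemma RD_crude_eq: "RD_crude M Y A = mean_given_A True (pr M C) - mean_given_A False (pr M C)"
  using cexp_A[of True] cexp_A[of False] by (simp add: RD_crude_def)

lemma monotone_in_iff:
  "monotone_in M Y A D \<longleftrightarrow>
     mean_given_A True (pC_given_D False) \<le> mean_given_A True (pC_given_D True)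
       \<and> mean_given_A False (pC_given_D False) \<le> mean_given_A False (pC_given_D True)
   \<or> mean_given_A True (pC_given_D True) \<le> mean_given_A True (pC_given_D False)
       \<and> mean_given_A False (pC_given_D True) \<le> mean_given_A False (pC_given_D False)"
  using cexp_A_D[of True True] cexp_A_D[of True False] cexp_A_D[of False True] cexp_A_D[of False False]
  by (simp add: monotone_in_def nondecr_in_def nonincr_in_def)

end

theorem corollary2:
  fixes M :: "'a measure" and A C D :: "'a \<Rightarrow> bool" and Y :: "'a \<Rightarrow> real"
  assumes "prob_space M"
    and "A \<in> measurable M (count_space UNIV)"
    and "C \<in> measurable M (count_space UNIV)"
    and "D \<in> measurable M (count_space UNIV)"
    and "Y \<in> borel_measurable M"
    and "integrable M Y"
    and factor: "\<And>x y z B. B \<in> sets borel \<Longrightarrow>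
        pr M (\<lambda>w. A w = x \<and> C w = y \<and> D w = z \<and> Y w \<in> B)
        = pr M (\<lambda>w. D w = z)
          * (pr M (\<lambda>w. C w = y \<and> D w = z) / pr M (\<lambda>w. D w = z))
          * (pr M (\<lambda>w. A w = x \<and> C w = y) / pr M (\<lambda>w. C w = y))
          * (pr M (\<lambda>w. Y w \<in> B \<and> A w = x \<and> C w = y) / pr M (\<lambda>w. A w = x \<and> C w = y))"
    and dep: "\<not> prob_space.indep_var M (count_space UNIV) C (count_space UNIV) D"
    and pos: "\<And>x y z. pr M (\<lambda>w. A w = x \<and> C w = y \<and> D w = z) > 0"
    and mono: "monotone_in M Y A D"
  shows "min (RD_adj M Y A C) (RD_crude M Y A) \<le> RD_adj M Y A D
       \<and> RD_adj M Y A D \<le> max (RD_adj M Y A C) (RD_crude M Y A)"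
proof -
  interpret proxy_confounder_model M A C D Y
    using assms(1-4,6) factor pos
    by (simp add: proxy_confounder_model_def proxy_confounder_model_axioms_def cond_prob_eq_pr)
  have "0 \<le> pr M D" "pr M D \<le> 1" "0 \<le> pC_given_D z" "pC_given_D z \<le> 1" for z
    by (auto simp: pr_def pC_given_D_def cond_prob_nonneg cond_prob_le_1)
  then show ?thesis
    unfolding RD_adj_D_eq RD_adj_C_eq RD_crude_eq pr_C
    using mono pA_given_C_pos pA_given_C_False
    by (intro risk_differences_between) (auto simp: monotone_in_iff)
qed

end
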